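(* There exists a kernel $K\in C(\mathbb{R}^3;\mathbb{R}^{3\times3})$ admitting a flow $X$ of $\omega_0$ (in the sense below) such that $X(t,\Xi)\subset\{0\}\times[-1,1]\times\{0\}$ for all sufficiently large $t>0$.
   Context: Let $\Xi=\{0\}\times[-1,1]\times[-1,1]\subset\mathbb{R}^3$, $\mathcal{H}^2_\Xi$ the two-dimensional Hausdorff measure on $\Xi$, and $\omega_0=(0,1,0)\,\mathcal{H}^2_\Xi$. A kernel $K\in C(\mathbb{R}^3;\mathbb{R}^{3\times3})$ admits a flow $X\in C([0,\infty)\times\Xi;\mathbb{R}^3)$ of $\omega_0$ if $X$ is differentiable with respect to $t$ and to $\alpha_2$, the velocity $u(t,x)=\int_\Xi K(x-X(t,\alpha))\,\partial_{\alpha_2}X(t,\alpha)\,d\mathcal{H}^2_\Xi(\alpha)$ exists for all $t\ge0$ and $x\in X(t,\Xi)$, and $\partial_tX(t,a)=u(t,X(t,a))$, $X(0,a)=a$ for all $(t,a)\in[0,\infty)\times\Xi$. *)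

theory Defs
  imports "HOL-Analysis.Analysis"
begin

definition pt :: "real \<Rightarrow> real \<Rightarrow> real \<Rightarrow> real^3" where
  "pt a b c = vector [a, b, c]"

definition Xi :: "(real^3) set" where
  "Xi = {pt 0 s r | s r. s \<in> {-1..1} \<and> r \<in> {-1..1}}"

definition Seg :: "(real^3) set" where
  "Seg = {pt 0 s 0 | s. s \<in> {-1..1}}"

definition dt :: "(real \<Rightarrow> real^3 \<Rightarrow> real^3) \<Rightarrow> real \<Rightarrow> real^3 \<Rightarrow> real^3" where
  "dt X t a = vector_derivative (\<lambda>s. X s a) (at t within {0..})"

definition da2 :: "(real \<Rightarrow> real^3 \<Rightarrow> real^3) \<Rightarrow> real \<Rightarrow> real^3 \<Rightarrow> real^3" where
  "da2 X t a = vector_derivative (\<lambda>s. X t (pt (a$1) s (a$3))) (at (a$2) within {-1..1})"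

text \<open>Integrand of the velocity, in the coordinates \<open>(\<alpha>\<^sub>2,\<alpha>\<^sub>3)\<close> of \<open>\<Xi>\<close>;
  \<open>\<H>\<^sup>2\<close> restricted to the flat square \<open>\<Xi>\<close> is Lebesgue measure on \<open>[-1,1]\<^sup>2\<close>.\<close>
definition vel_integrand ::
  "(real^3 \<Rightarrow> real^3^3) \<Rightarrow> (real \<Rightarrow> real^3 \<Rightarrow> real^3) \<Rightarrow> real \<Rightarrow> real^3 \<Rightarrow> real \<times> real \<Rightarrow> real^3" where
  "vel_integrand K X t x p =
     K (x - X t (pt 0 (fst p) (snd p))) *v da2 X t (pt 0 (fst p) (snd p))"

definition velocity ::
  "(real^3 \<Rightarrow> real^3^3) \<Rightarrow> (real \<Rightarrow> real^3 \<Rightarrow> real^3) \<Rightarrow> real \<Rightarrow> real^3 \<Rightarrow> real^3" where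
  "velocity K X t x = set_lebesgue_integral lborel ({-1..1} \<times> {-1..1}) (vel_integrand K X t x)"

text \<open>\<open>K\<close> admits the flow \<open>X\<close> of \<open>\<omega>\<^sub>0 = (0,1,0) \<H>\<^sup>2\<llcorner>\<Xi>\<close>.\<close>
definition admits_flow :: "(real^3 \<Rightarrow> real^3^3) \<Rightarrow> (real \<Rightarrow> real^3 \<Rightarrow> real^3) \<Rightarrow> bool" where
  "admits_flow K X \<longleftrightarrow>
     continuous_on ({0..} \<times> Xi) (\<lambda>(t, a). X t a) \<and>
     (\<forall>t\<ge>0. \<forall>a\<in>Xi. (\<lambda>s. X s a) differentiable (at t within {0..})) \<and>
     (\<forall>t\<ge>0. \<forall>a\<in>Xi. (\<lambda>s. X t (pt (a$1) s (a$3))) differentiable (at (a$2) within {-1..1})) \<and>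
     (\<forall>t\<ge>0. \<forall>x\<in>X t ` Xi. set_integrable lborel ({-1..1} \<times> {-1..1}) (vel_integrand K X t x)) \<and>
     (\<forall>t\<ge>0. \<forall>a\<in>Xi. dt X t a = velocity K X t (X t a)) \<and>
     (\<forall>a\<in>Xi. X 0 a = a)"

end

theory Submission
  imports Defs
begin

text \<open>With \<open>r(t) = max 0 (1 - t)\<close>, the flow
  \<open>X(t, (0, \<alpha>\<^sub>2, \<alpha>\<^sub>3)) = (\<alpha>\<^sub>3 (r\<^sup>2 - r\<^sup>3), \<alpha>\<^sub>2, \<alpha>\<^sub>3 r\<^sup>2)\<close> is the identity at \<open>t = 0\<close>,
  squashes \<open>\<Xi>\<close> onto the segment from \<open>t = 1\<close> on, and is \<open>C\<^sup>1\<close> in \<open>t\<close> because \<open>r\<close> only enters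
  through powers of order at least two. Since \<open>\<partial>\<^sub>\<alpha>\<^sub>2 X = e\<^sub>2\<close>, only the second column of
  the kernel matters, and \<open>X(t, a) - X(t, p) = s (r\<^sup>2 - r\<^sup>3, *, r\<^sup>2)\<close> with \<open>s = a\<^sub>3 - p\<^sub>3\<close>.
  The column is chosen so that at such points it equals \<open>s/4 \<partial>\<^sub>t (r\<^sup>2 - r\<^sup>3, 0, r\<^sup>2)\<close>;
  integrating \<open>s/4\<close> over the square gives \<open>a\<^sub>3\<close>, so the velocity is exactly \<open>\<partial>\<^sub>t X(t, a)\<close>. The column needs
  \<open>s r\<close>, which it recovers continuously from \<open>(z\<^sub>3, z\<^sub>3 - z\<^sub>1) = (s r\<^sup>2, s r\<^sup>3)\<close>.\<close>

lemma has_real_derivative_max_0_power: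
  fixes x :: real
  assumes "n \<ge> 2"
  shows "((\<lambda>x. max 0 x ^ n) has_real_derivative real n * max 0 x ^ (n - 1)) (at x)"
proof (cases x "0::real" rule: linorder_cases)
  case less
  have "\<forall>\<^sub>F y in nhds x. max 0 y ^ n = 0"
    using eventually_nhds_in_open[of "{..<0}" x] less assms by (auto elim!: eventually_mono)
  from DERIV_cong_ev[OF refl this refl] less assms show ?thesis by (simp add: power_0_left)
next
  case greater
  have "\<forall>\<^sub>F y in nhds x. max 0 y ^ n = y ^ n"
    using eventually_nhds_in_open[of "{0<..}" x] greater by (auto elim!: eventually_mono)
  from DERIV_cong_ev[OF refl this refl] greater show ?thesis by (simp add: DERIV_pow)
next
  case equal
  have "\<forall>\<^sub>F y in at_left 0. max 0 y ^ n / y = (0::real)"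
    using assms by (simp add: eventually_at_filter)
  then have "((\<lambda>y. max 0 y ^ n / y) \<longlongrightarrow> (0::real)) (at_left 0)"
    by (rule tendsto_eventually)
  moreover have "((\<lambda>y. max 0 y ^ n / y) \<longlongrightarrow> (0::real)) (at_right 0)"
  proof (rule tendsto_cong[THEN iffD1])
    show "\<forall>\<^sub>F y in at_right 0. y ^ (n - 1) = max 0 y ^ n / (y::real)"
      using assms by (simp add: eventually_at_filter power_eq_if)
    have "((\<lambda>y::real. y ^ (n - 1)) \<longlongrightarrow> 0 ^ (n - 1)) (at_right 0)"
      by (intro tendsto_intros)
    then show "((\<lambda>y::real. y ^ (n - 1)) \<longlongrightarrow> 0) (at_right 0)"
      using assms by simp
  qed
  ultimately show ?thesis
    using equal assms by (simp add: has_field_derivative_iff filterlim_at_split power_0_left)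
qed

definition ramp :: "real \<Rightarrow> real" where
  "ramp t = max 0 (1 - t)"

lemma has_real_derivative_ramp_power:
  assumes "n \<ge> 2"
  shows "((\<lambda>t. ramp t ^ n) has_real_derivative - real n * ramp t ^ (n - 1)) (at t)"
  using DERIV_chain2[OF has_real_derivative_max_0_power[OF assms] DERIV_diff[OF DERIV_const DERIV_ident]]
  by (simp add: ramp_def)

lemma pt_eq_axis: "pt a b c = a *\<^sub>R axis 1 1 + b *\<^sub>R axis 2 1 + c *\<^sub>R axis 3 1"
  by (simp add: pt_def vec_eq_iff forall_3 axis_def)

lemma pt_nth [simp]: "pt a b c $ 1 = a" "pt a b c $ 2 = b" "pt a b c $ 3 = c"
  by (simp_all add: pt_def)

lemma scaleR_pt: "c *\<^sub>R pt a b d = pt (c * a) (c * b) (c * d)"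
  by (simp add: pt_def vec_eq_iff forall_3)

lemma has_vector_derivative_pt:
  assumes "(f has_real_derivative f') F" "(g has_real_derivative g') F" "(h has_real_derivative h') F"
  shows "((\<lambda>s. pt (f s) (g s) (h s)) has_vector_derivative pt f' g' h') F"
proof -
  have scale: "((\<lambda>s. u s *\<^sub>R v) has_vector_derivative u' *\<^sub>R v) F"
    if "(u has_real_derivative u') F" for u u' and v :: "real^3"
    using bounded_linear.has_vector_derivative[OF bounded_linear_scaleR_left] that
    unfolding has_real_derivative_iff_has_vector_derivative .
  show ?thesis
    unfolding pt_eq_axis by (intro has_vector_derivative_add scale assms)
qed

text \<open>On the curve \<open>(a, d) = (s r\<^sup>2, s r\<^sup>3)\<close> with \<open>|s| \<le> 2\<close>, \<open>kappa a d = -a\<^sup>2/(2d) = -s r/2\<close>;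
  the term \<open>|a|\<^sup>3/2\<close> only matters off the curve, where it keeps \<open>kappa\<^sup>2 \<le> |a|\<close> and hence
  makes \<open>kappa\<close> continuous at the origin.\<close>

definition kappa :: "real \<Rightarrow> real \<Rightarrow> real" where
  "kappa a d = - (a\<^sup>2 * d) / (2 * max (d\<^sup>2) (\<bar>a\<bar> ^ 3 / 2))"

lemma kappa_square_le: "(kappa a d)\<^sup>2 \<le> \<bar>a\<bar>"
proof -
  define M where "M = max (d\<^sup>2) (\<bar>a\<bar> ^ 3 / 2)"
  have "a ^ 4 * d\<^sup>2 \<le> 4 * M\<^sup>2 * \<bar>a\<bar>"
  proof -
    have "a ^ 4 * d\<^sup>2 = 2 * (d\<^sup>2 * (\<bar>a\<bar> ^ 3 / 2)) * \<bar>a\<bar>"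
      by (simp add: power_abs[symmetric] power2_eq_square power3_eq_cube power4_eq_xxxx
          abs_mult_self_eq algebra_simps)
    also have "\<dots> \<le> 2 * (M * M) * \<bar>a\<bar>"
      unfolding M_def by (intro mult_right_mono mult_left_mono mult_mono) (auto simp: le_max_iff_disj)
    also have "\<dots> \<le> 4 * M\<^sup>2 * \<bar>a\<bar>"
      by (simp add: power2_eq_square mult_right_mono)
    finally show ?thesis .
  qed
  moreover have "(kappa a d)\<^sup>2 = a ^ 4 * d\<^sup>2 / (4 * M\<^sup>2)"
    by (simp add: kappa_def M_def power_divide power_mult_distrib power2_eq_square power4_eq_xxxx)
  ultimately show ?thesis
    by (cases "M = 0") (auto simp: divide_le_eq mult.commute)
qed

lemma isCont_kappa: "isCont (\<lambda>p. kappa (fst p) (snd p)) p"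
proof (cases "p = 0")
  case False
  then have "max ((snd p)\<^sup>2) (\<bar>fst p\<bar> ^ 3 / 2) \<noteq> 0"
    by (auto simp: prod_eq_iff max_def)
  then show ?thesis
    unfolding kappa_def by (intro continuous_intros) auto
next
  case True
  have "((\<lambda>q. kappa (fst q) (snd q)) \<longlongrightarrow> 0) (at p)"
  proof (rule Lim_null_comparison)
    show "\<forall>\<^sub>F q in at p. norm (kappa (fst q) (snd q)) \<le> sqrt \<bar>fst q\<bar>"
      using real_sqrt_le_mono[OF kappa_square_le] by (intro always_eventually) simp
    have "((\<lambda>q. sqrt \<bar>fst q\<bar>) \<longlongrightarrow> sqrt \<bar>fst p\<bar>) (at p)"
      by (intro tendsto_intros)
    then show "((\<lambda>q. sqrt \<bar>fst q\<bar>) \<longlongrightarrow> 0) (at p)"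
      using True by simp
  qed
  then show ?thesis
    using True by (simp add: isCont_def kappa_def)
qed

lemma kappa_along_curve:
  assumes "\<bar>s\<bar> \<le> 2"
  shows "kappa (s * r\<^sup>2) (s * r ^ 3) = - (s * r) / 2"
proof -
  have "\<bar>s * r\<^sup>2\<bar> ^ 3 / 2 = (\<bar>s\<bar> / 2) * (s * r ^ 3)\<^sup>2"
    by (simp add: abs_mult power_mult_distrib power_abs power2_eq_square power3_eq_cube
        abs_mult_self_eq algebra_simps)
  also have "\<dots> \<le> (s * r ^ 3)\<^sup>2"
    using assms by (intro mult_left_le_one_le) auto
  finally have "kappa (s * r\<^sup>2) (s * r ^ 3) = - ((s * r\<^sup>2)\<^sup>2 * (s * r ^ 3)) / (2 * (s * r ^ 3)\<^sup>2)"
    by (simp add: kappa_def max_def)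
  also have "\<dots> = - (s * r) / 2"
    by (cases "s * r = 0") (auto simp: field_simps power2_eq_square power3_eq_cube)
  finally show ?thesis .
qed

definition kernel_column :: "real^3 \<Rightarrow> real^3" where
  "kernel_column z = pt (kappa (z$3) (z$3 - z$1) + 3/4 * z$3) 0 (kappa (z$3) (z$3 - z$1))"

definition collapsing_kernel :: "real^3 \<Rightarrow> real^3^3" where
  "collapsing_kernel z = (\<chi> i j. if j = 2 then kernel_column z $ i else 0)"

lemma collapsing_kernel_mult: "collapsing_kernel z *v w = w$2 *\<^sub>R kernel_column z"
  by (simp add: collapsing_kernel_def vec_eq_iff matrix_vector_mult_def sum_3 mult.commute)

lemma continuous_on_kernel_column: "continuous_on UNIV kernel_column"
proof -
  have "isCont (\<lambda>z::real^3. kappa (z$3) (z$3 - z$1)) z" for z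
  proof -
    have "isCont (\<lambda>z::real^3. (z$3, z$3 - z$1)) z"
      by (intro continuous_intros)
    from isCont_o2[OF this isCont_kappa] show ?thesis by simp
  qed
  then show ?thesis
    unfolding kernel_column_def pt_eq_axis
    by (intro continuous_at_imp_continuous_on ballI continuous_intros)
qed

lemma continuous_on_collapsing_kernel: "continuous_on UNIV collapsing_kernel"
  unfolding collapsing_kernel_def
proof (intro continuous_on_vec_lambda)
  fix i j :: 3
  show "continuous_on UNIV (\<lambda>z. if j = 2 then kernel_column z $ i else 0)"
    by (cases "j = 2") (simp_all add: continuous_on_component continuous_on_kernel_column)
qed

lemma kernel_column_along_curve:
  assumes "\<bar>s\<bar> \<le> 2" "z$1 = s * (r\<^sup>2 - r ^ 3)" "z$3 = s * r\<^sup>2"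
  shows "kernel_column z = (s / 4) *\<^sub>R pt (3 * r\<^sup>2 - 2 * r) 0 (- 2 * r)"
proof -
  have "z$3 - z$1 = s * r ^ 3"
    using assms by (simp add: algebra_simps)
  then have "kappa (z$3) (z$3 - z$1) = - (s * r) / 2"
    using kappa_along_curve[OF assms(1)] assms(3) by simp
  then show ?thesis
    using assms(3) by (simp add: kernel_column_def vec_eq_iff forall_3 field_simps)
qed

definition collapsing_flow :: "real \<Rightarrow> real^3 \<Rightarrow> real^3" where
  "collapsing_flow t a = pt (a$1 + a$3 * (ramp t ^ 2 - ramp t ^ 3)) (a$2) (a$3 * ramp t ^ 2)"

definition collapse_speed :: "real \<Rightarrow> real^3" where
  "collapse_speed t = pt (3 * ramp t ^ 2 - 2 * ramp t) 0 (- 2 * ramp t)"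

lemma collapsing_flow_has_time_derivative:
  "((\<lambda>s. collapsing_flow s a) has_vector_derivative a$3 *\<^sub>R collapse_speed t) (at t within S)"
proof -
  have r2: "((\<lambda>s. ramp s ^ 2) has_real_derivative - 2 * ramp t) (at t)"
    using has_real_derivative_ramp_power[of 2] by simp
  have r3: "((\<lambda>s. ramp s ^ 3) has_real_derivative - 3 * ramp t ^ 2) (at t)"
    using has_real_derivative_ramp_power[of 3] by simp
  have x1: "((\<lambda>s. a$1 + a$3 * (ramp s ^ 2 - ramp s ^ 3)) has_real_derivative
      a$3 * (3 * ramp t ^ 2 - 2 * ramp t)) (at t)"
    by (rule DERIV_cong[OF DERIV_add[OF DERIV_const DERIV_cmult[OF DERIV_diff[OF r2 r3]]]])
      (simp add: algebra_simps)
  have x3: "((\<lambda>s. a$3 * ramp s ^ 2) has_real_derivative a$3 * (- 2 * ramp t)) (at t)"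
    using DERIV_cmult[OF r2] .
  have "((\<lambda>s. collapsing_flow s a) has_vector_derivative a$3 *\<^sub>R collapse_speed t) (at t)"
    using has_vector_derivative_pt[OF x1 DERIV_const x3]
    by (simp add: collapsing_flow_def collapse_speed_def scaleR_pt)
  then show ?thesis
    by (rule has_vector_derivative_at_within)
qed

lemma collapsing_flow_has_alpha2_derivative:
  "((\<lambda>s. collapsing_flow t (pt b s c)) has_vector_derivative pt 0 1 0) (at x within S)"
  unfolding collapsing_flow_def pt_nth
  by (intro has_vector_derivative_pt DERIV_const DERIV_ident)

lemma continuous_on_collapsing_flow:
  "continuous_on UNIV (\<lambda>(t, a). collapsing_flow t a)"
  unfolding collapsing_flow_def pt_eq_axis ramp_def case_prod_unfold
  by (intro continuous_intros)

lemma collapsing_flow_at_0: "collapsing_flow 0 a = a"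
  by (simp add: collapsing_flow_def ramp_def vec_eq_iff forall_3)

lemma collapsing_flow_collapsed:
  assumes "t \<ge> 1"
  shows "collapsing_flow t (pt 0 s r) = pt 0 s 0"
  using assms by (simp add: collapsing_flow_def ramp_def)

lemma has_integral_square_affine:
  "((\<lambda>p::real \<times> real. a - snd p) has_integral 4 * a) ({-1..1} \<times> {-1..1})"
proof -
  have inner: "integral {-1..1} (\<lambda>y::real. a - y) = 2 * a"
    using has_integral_diff[OF has_integral_const_real[of a "-1" 1] ident_has_integral[of "-1" 1]]
    by (simp add: integral_unique)
  have "integral (cbox (-1, -1) (1, 1)) (\<lambda>p::real \<times> real. a - snd p)
      = integral (cbox (-1) 1) (\<lambda>x::real. integral (cbox (-1) 1) (\<lambda>y::real. a - y))"
    by (subst integral_prod_continuous) (auto intro!: continuous_intros)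
  also have "\<dots> = 4 * a"
    using inner by simp
  moreover have "(\<lambda>p::real \<times> real. a - snd p) integrable_on cbox (-1, -1) (1, 1)"
    by (intro integrable_continuous continuous_intros)
  ultimately show ?thesis
    by (simp add: has_integral_integrable_integral cbox_Pair_eq)
qed

lemma vel_integrand_collapsing:
  assumes "a3 \<in> {-1..1}" "p \<in> {-1..1} \<times> {-1..1}"
  shows "vel_integrand collapsing_kernel collapsing_flow t (collapsing_flow t (pt 0 a2 a3)) p
           = (a3 - snd p) *\<^sub>R (collapse_speed t /\<^sub>R 4)"
proof -
  obtain p1 p2 where p: "p = (p1, p2)" "p1 \<in> {-1..1}" "p2 \<in> {-1..1}"
    using assms(2) by auto
  have "da2 collapsing_flow t (pt 0 p1 p2) = pt 0 1 0"
    unfolding da2_def pt_nth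
    by (rule vector_derivative_within_closed_interval[OF _ p(2) collapsing_flow_has_alpha2_derivative]) simp
  moreover have "kernel_column (collapsing_flow t (pt 0 a2 a3) - collapsing_flow t (pt 0 p1 p2))
      = ((a3 - p2) / 4) *\<^sub>R collapse_speed t"
    unfolding collapse_speed_def
    by (rule kernel_column_along_curve) (use assms p in \<open>auto simp: collapsing_flow_def algebra_simps\<close>)
  ultimately show ?thesis
    by (simp add: vel_integrand_def collapsing_kernel_mult p)
qed

lemma velocity_collapsing:
  assumes "a \<in> Xi"
  shows "set_integrable lborel ({-1..1} \<times> {-1..1})
           (vel_integrand collapsing_kernel collapsing_flow t (collapsing_flow t a))"
    and "velocity collapsing_kernel collapsing_flow t (collapsing_flow t a) = a$3 *\<^sub>R collapse_speed t"
proof -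
  obtain a2 a3 where a: "a = pt 0 a2 a3" "a3 \<in> {-1..1}"
    using assms by (auto simp: Xi_def)
  let ?Q = "{-1..1} \<times> {-1..1} :: (real \<times> real) set"
  let ?v = "vel_integrand collapsing_kernel collapsing_flow t (collapsing_flow t a)"
  let ?f = "\<lambda>p::real \<times> real. (a3 - snd p) *\<^sub>R (collapse_speed t /\<^sub>R 4)"
  have eq: "?v p = ?f p" if "p \<in> ?Q" for p
    using vel_integrand_collapsing[OF a(2) that] a(1) by simp
  have "set_integrable lborel ?Q ?f"
    unfolding set_integrable_def
    by (intro borel_integrable_compact compact_Times compact_Icc continuous_intros)
  moreover have "set_integrable lborel ?Q ?v = set_integrable lborel ?Q ?f"
    by (rule set_integrable_cong) (simp_all add: eq)
  ultimately show "set_integrable lborel ?Q ?v"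
    by simp
  have "velocity collapsing_kernel collapsing_flow t (collapsing_flow t a) = (LINT p:?Q|lborel. ?f p)"
    unfolding velocity_def
    by (rule set_lebesgue_integral_cong) (simp_all add: eq borel_closed closed_Times)
  also have "\<dots> = integral ?Q ?f"
    by (rule set_borel_integral_eq_integral(2)[OF \<open>set_integrable lborel ?Q ?f\<close>])
  also have "\<dots> = (4 * a3) *\<^sub>R (collapse_speed t /\<^sub>R 4)"
    by (rule integral_unique[OF has_integral_scaleR_left[OF has_integral_square_affine]])
  finally show "velocity collapsing_kernel collapsing_flow t (collapsing_flow t a) = a$3 *\<^sub>R collapse_speed t"
    using a(1) by simp
qed

lemma admits_flow_collapsing: "admits_flow collapsing_kernel collapsing_flow"
  unfolding admits_flow_def
proof (intro conjI ballI allI impI)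
  show "continuous_on ({0..} \<times> Xi) (\<lambda>(t, a). collapsing_flow t a)"
    using continuous_on_collapsing_flow by (rule continuous_on_subset) simp
next
  fix t :: real and a assume "t \<ge> 0" "a \<in> Xi"
  have "at t within {0..} \<noteq> bot"
    using \<open>t \<ge> 0\<close> islimpt_subset[of t "{t..t+1}" "{0..}"] by (simp add: trivial_limit_within)
  then show "dt collapsing_flow t a = velocity collapsing_kernel collapsing_flow t (collapsing_flow t a)"
    unfolding dt_def velocity_collapsing(2)[OF \<open>a \<in> Xi\<close>]
    by (rule vector_derivative_within[OF _ collapsing_flow_has_time_derivative])
qed (auto intro: differentiableI_vector velocity_collapsing(1)
       collapsing_flow_has_time_derivative collapsing_flow_has_alpha2_derivative
     simp: collapsing_flow_at_0)

lemma collapsing_flow_eventually_in_Seg: "\<forall>\<^sub>F t in at_top. collapsing_flow t ` Xi \<subseteq> Seg"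
  unfolding eventually_at_top_linorder
  by (rule exI[of _ 1]) (auto simp: Xi_def Seg_def collapsing_flow_collapsed)

theorem theorem4p2:
  shows "\<exists>(K :: real^3 \<Rightarrow> real^3^3) (X :: real \<Rightarrow> real^3 \<Rightarrow> real^3).
           continuous_on UNIV K \<and> admits_flow K X \<and>
           (\<forall>\<^sub>F t in at_top. X t ` Xi \<subseteq> Seg)"
  using continuous_on_collapsing_kernel admits_flow_collapsing collapsing_flow_eventually_in_Seg
  by blast

end
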